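(* Let $0\le\lambda<1$ and $N=1$. Then for $0\le\delta\le1$, $$\zeta(1,\delta,\lambda)=\max\Big\{0,\frac{\lambda(\delta-\lambda)}{1-\lambda},\frac{\delta(2-\lambda)-1}{1-\lambda}\Big\}=\begin{cases}0,&0\le\delta\le\lambda,\\ \frac{\lambda(\delta-\lambda)}{1-\lambda},&\lambda\le\delta\le\frac{1+\lambda}{2},\\ \frac{\delta(2-\lambda)-1}{1-\lambda},&\frac{1+\lambda}{2}\le\delta\le1.\end{cases}$$
   Context: Let $\mathcal H$ be a Hilbert space of finite dimension $D\ge 2$ and $|\Psi\rangle\in\mathcal H$ a unit vector. For $0\le\lambda<1$ let $\Omega_\lambda=|\Psi\rangle\langle\Psi|+\lambda(1-|\Psi\rangle\langle\Psi|)$. For an integer $N\ge1$ and a density operator $\rho$ on $\mathcal H^{\otimes(N+1)}$ put $p_\rho=\mathrm{tr}[(\Omega_\lambda^{\otimes N}\otimes 1)\rho]$ and $f_\rho=\mathrm{tr}[(\Omega_\lambda^{\otimes N}\otimes|\Psi\rangle\langle\Psi|)\rho]$, and $\zeta(N,\delta,\lambda)=\min\{f_\rho:p_\rho\ge\delta\}$, the minimum over permutation-invariant density operators on $\mathcal H^{\otimes(N+1)}$. *)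

theory Defs
  imports Complex_Main "Jordan_Normal_Form.Matrix"
begin

text \<open>Operators on the finite-dimensional Hilbert space C^D are complex D x D matrices;
  operators on C^D tensor C^D are (D*D) x (D*D) matrices, with the basis vector
  e_a tensor e_b having index a*D+b.\<close>

definition mtrace :: "complex mat \<Rightarrow> complex" where
  "mtrace A = (\<Sum>i<dim_row A. A $$ (i, i))"

definition kron :: "complex mat \<Rightarrow> complex mat \<Rightarrow> complex mat" where
  "kron A B = mat (dim_row A * dim_row B) (dim_col A * dim_col B)
     (\<lambda>(i, j). A $$ (i div dim_row B, j div dim_col B) * B $$ (i mod dim_row B, j mod dim_col B))"

definition ket_bra :: "complex vec \<Rightarrow> complex mat" where
  "ket_bra \<psi> = mat (dim_vec \<psi>) (dim_vec \<psi>) (\<lambda>(i, j). \<psi> $ i * cnj (\<psi> $ j))"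

definition unit_vec_C :: "nat \<Rightarrow> complex vec \<Rightarrow> bool" where
  "unit_vec_C D \<psi> \<longleftrightarrow> \<psi> \<in> carrier_vec D \<and> (\<Sum>i<D. (cmod (\<psi> $ i))\<^sup>2) = 1"

definition Omega :: "real \<Rightarrow> complex vec \<Rightarrow> complex mat" where
  "Omega lam \<psi> = ket_bra \<psi> + complex_of_real lam \<cdot>\<^sub>m (1\<^sub>m (dim_vec \<psi>) - ket_bra \<psi>)"

definition psd :: "nat \<Rightarrow> complex mat \<Rightarrow> bool" where
  "psd n A \<longleftrightarrow> A \<in> carrier_mat n n \<and>
     (\<forall>v \<in> carrier_vec n. Im (conjugate v \<bullet> (A *\<^sub>v v)) = 0 \<and> Re (conjugate v \<bullet> (A *\<^sub>v v)) \<ge> 0)"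

definition density_op :: "nat \<Rightarrow> complex mat \<Rightarrow> bool" where
  "density_op n \<rho> \<longleftrightarrow> psd n \<rho> \<and> mtrace \<rho> = 1"

definition swap_op :: "nat \<Rightarrow> complex mat" where
  "swap_op D = mat (D * D) (D * D)
     (\<lambda>(i, j). if i = (j mod D) * D + j div D then 1 else 0)"

text \<open>Permutation invariance on two copies (the only nontrivial permutation is the swap).\<close>
definition perm_inv2 :: "nat \<Rightarrow> complex mat \<Rightarrow> bool" where
  "perm_inv2 D \<rho> \<longleftrightarrow> swap_op D * \<rho> * swap_op D = \<rho>"

text \<open>p_rho and f_rho for N = 1 (traces of products of positive operators, hence real).\<close>
definition p_val :: "real \<Rightarrow> complex vec \<Rightarrow> complex mat \<Rightarrow> real" where
  "p_val lam \<psi> \<rho> = Re (mtrace (kron (Omega lam \<psi>) (1\<^sub>m (dim_vec \<psi>)) * \<rho>))"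

definition f_val :: "real \<Rightarrow> complex vec \<Rightarrow> complex mat \<Rightarrow> real" where
  "f_val lam \<psi> \<rho> = Re (mtrace (kron (Omega lam \<psi>) (ket_bra \<psi>) * \<rho>))"

definition feasible1 :: "nat \<Rightarrow> real \<Rightarrow> complex vec \<Rightarrow> real \<Rightarrow> complex mat set" where
  "feasible1 D lam \<psi> \<delta> = {\<rho>. density_op (D * D) \<rho> \<and> perm_inv2 D \<rho> \<and> p_val lam \<psi> \<rho> \<ge> \<delta>}"

definition is_zeta1 :: "nat \<Rightarrow> real \<Rightarrow> complex vec \<Rightarrow> real \<Rightarrow> real \<Rightarrow> bool" where
  "is_zeta1 D lam \<psi> \<delta> z \<longleftrightarrow>
     (\<exists>\<rho> \<in> feasible1 D lam \<psi> \<delta>. f_val lam \<psi> \<rho> = z) \<and>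
     (\<forall>\<rho> \<in> feasible1 D lam \<psi> \<delta>. z \<le> f_val lam \<psi> \<rho>)"

end

theory Submission
  imports Defs
begin

text \<open>Write \<open>P = |\<Psi>\<rangle>\<langle>\<Psi>|\<close>, \<open>Q = 1 - P\<close> and, for a swap-invariant state \<open>\<rho>\<close> on two copies,
  \<open>A = tr((P\<otimes>P)\<rho>)\<close> and \<open>B = tr((P\<otimes>1)\<rho>) = tr((1\<otimes>P)\<rho>)\<close>. Since \<open>\<Omega>\<^sub>\<lambda> = (1-\<lambda>)P + \<lambda>\<close>, we get
  \<open>p = (1-\<lambda>)B + \<lambda>\<close> and \<open>f = (1-\<lambda>)A + \<lambda>B\<close>, and positivity of \<open>tr((P\<otimes>P)\<rho>) = A\<close>,
  \<open>tr((P\<otimes>Q)\<rho>) = B - A\<close> and \<open>tr((Q\<otimes>Q)\<rho>) = 1 - 2B + A\<close> gives \<open>0 \<le> A \<le> B\<close> and \<open>2B \<le> 1 + A\<close>.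
  Conversely every such pair \<open>(A, B)\<close> is realised by the state
  \<open>A |\<Psi>\<Psi>\<rangle>\<langle>\<Psi>\<Psi>| + (B - A) (|\<Psi>\<Phi>\<rangle>\<langle>\<Psi>\<Phi>| + |\<Phi>\<Psi>\<rangle>\<langle>\<Phi>\<Psi>|) + (1 - 2B + A) |\<Phi>\<Phi>\<rangle>\<langle>\<Phi>\<Phi>|\<close> with \<open>\<Phi> \<perp> \<Psi>\<close>.
  So \<open>\<zeta>(1,\<delta>,\<lambda>)\<close> is the value of the linear program minimising \<open>(1-\<lambda>)A + \<lambda>B\<close> over this
  region subject to \<open>(1-\<lambda>)B + \<lambda> \<ge> \<delta>\<close>.\<close>

section \<open>Entrywise calculus\<close>

text \<open>Operators are handled through their entry functions, so that sums of operators and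
  Kronecker products can be manipulated pointwise; the index \<open>a*D+b\<close> stands for \<open>e\<^sub>a \<otimes> e\<^sub>b\<close>.\<close>

definition tr_prod :: "nat \<Rightarrow> (nat \<Rightarrow> nat \<Rightarrow> complex) \<Rightarrow> (nat \<Rightarrow> nat \<Rightarrow> complex) \<Rightarrow> complex" where
  "tr_prod n M R = (\<Sum>i<n. \<Sum>k<n. M i k * R k i)"

definition sesq :: "nat \<Rightarrow> (nat \<Rightarrow> complex) \<Rightarrow> (nat \<Rightarrow> nat \<Rightarrow> complex) \<Rightarrow> (nat \<Rightarrow> complex) \<Rightarrow> complex" where
  "sesq n x M y = (\<Sum>i<n. \<Sum>k<n. cnj (x i) * M i k * y k)"

definition outer :: "(nat \<Rightarrow> complex) \<Rightarrow> nat \<Rightarrow> nat \<Rightarrow> complex" where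
  "outer v = (\<lambda>i k. v i * cnj (v k))"

definition id_fun :: "nat \<Rightarrow> nat \<Rightarrow> complex" where
  "id_fun = (\<lambda>i k. if i = k then 1 else 0)"

definition kron_fun :: "nat \<Rightarrow> (nat \<Rightarrow> nat \<Rightarrow> complex) \<Rightarrow> (nat \<Rightarrow> nat \<Rightarrow> complex) \<Rightarrow> nat \<Rightarrow> nat \<Rightarrow> complex" where
  "kron_fun D X Y = (\<lambda>i k. X (i div D) (k div D) * Y (i mod D) (k mod D))"

definition tensor_fun :: "nat \<Rightarrow> (nat \<Rightarrow> complex) \<Rightarrow> (nat \<Rightarrow> complex) \<Rightarrow> nat \<Rightarrow> complex" where
  "tensor_fun D u w = (\<lambda>i. u (i div D) * w (i mod D))"

definition entries :: "complex mat \<Rightarrow> nat \<Rightarrow> nat \<Rightarrow> complex" where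
  "entries A = (\<lambda>i k. A $$ (i, k))"

lemma tr_prod_cong:
  assumes "\<And>i k. i < n \<Longrightarrow> k < n \<Longrightarrow> M i k = M' i k"
  shows "tr_prod n M R = tr_prod n M' R"
  using assms unfolding tr_prod_def by (auto intro!: sum.cong)

lemma tr_prod_cong_right:
  assumes "\<And>i k. i < n \<Longrightarrow> k < n \<Longrightarrow> R i k = R' i k"
  shows "tr_prod n M R = tr_prod n M R'"
  using assms unfolding tr_prod_def by (auto intro!: sum.cong)

lemma tr_prod_add: "tr_prod n (\<lambda>i k. M i k + N i k) R = tr_prod n M R + tr_prod n N R"
  unfolding tr_prod_def by (simp add: sum.distrib algebra_simps)

lemma tr_prod_diff: "tr_prod n (\<lambda>i k. M i k - N i k) R = tr_prod n M R - tr_prod n N R"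
  unfolding tr_prod_def by (simp add: sum_subtractf algebra_simps)

lemma tr_prod_scale: "tr_prod n (\<lambda>i k. c * M i k) R = c * tr_prod n M R"
  unfolding tr_prod_def by (simp add: sum_distrib_left algebra_simps)

lemma tr_prod_sum: "tr_prod n (\<lambda>i k. \<Sum>j\<in>J. M j i k) R = (\<Sum>j\<in>J. tr_prod n (M j) R)"
  unfolding tr_prod_def by (simp add: sum_distrib_right sum.swap[of _ J])

lemma tr_prod_sum_right:
  "tr_prod n M (\<lambda>i k. \<Sum>j\<in>J. c j * R j i k) = (\<Sum>j\<in>J. c j * tr_prod n M (R j))"
  unfolding tr_prod_def by (simp add: sum_distrib_left sum.swap[of _ J] algebra_simps)

lemma tr_prod_outer: "tr_prod n (outer v) R = sesq n v R v"
  unfolding tr_prod_def sesq_def outer_def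
  by (subst sum.swap) (auto simp: algebra_simps intro!: sum.cong)

lemma tr_prod_outer_right: "tr_prod n M (outer v) = sesq n v M v"
  unfolding tr_prod_def sesq_def outer_def by (auto simp: algebra_simps intro!: sum.cong)

lemma sesq_cong:
  assumes "\<And>i k. i < n \<Longrightarrow> k < n \<Longrightarrow> M i k = M' i k"
  shows "sesq n x M y = sesq n x M' y"
  using assms unfolding sesq_def by (auto intro!: sum.cong)

lemma sesq_sum: "sesq n x (\<lambda>i k. \<Sum>j\<in>J. c j * M j i k) y = (\<Sum>j\<in>J. c j * sesq n x (M j) y)"
  unfolding sesq_def by (simp add: sum_distrib_left sum_distrib_right sum.swap[of _ J] algebra_simps)

lemma sesq_outer: "sesq n x (outer v) x = complex_of_real ((cmod (\<Sum>i<n. cnj (x i) * v i))\<^sup>2)"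
proof -
  have "sesq n x (outer v) x = (\<Sum>i<n. cnj (x i) * v i) * cnj (\<Sum>i<n. cnj (x i) * v i)"
    unfolding sesq_def outer_def by (simp add: sum_product algebra_simps)
  then show ?thesis unfolding complex_norm_square .
qed

lemma sesq_id_fun: "sesq n x id_fun x = (\<Sum>i<n. cnj (x i) * x i)"
  unfolding sesq_def id_fun_def by (simp add: if_distrib if_distribR cong: if_cong)

lemma sum_lessThan_mult: "(\<Sum>i<m * D. g i) = (\<Sum>a<m. \<Sum>b<D. g (a * D + b :: nat))"
proof -
  have shift: "(\<Sum>i\<in>{a * D..<a * D + D}. g i) = (\<Sum>b<D. g (a * D + b))" for a
    using sum.shift_bounds_nat_ivl[of g 0 "a * D" D] by (simp add: lessThan_atLeast0 add.commute)
  show ?thesis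
    using sum.nat_group[of g D m] by (simp add: shift)
qed

lemma sesq_kron_tensor:
  "sesq (D * D) (tensor_fun D u w) (kron_fun D X Y) (tensor_fun D u' w')
     = sesq D u X u' * sesq D w Y w'"
proof -
  have "sesq (D * D) (tensor_fun D u w) (kron_fun D X Y) (tensor_fun D u' w') =
    (\<Sum>a<D. \<Sum>b<D. \<Sum>c<D. \<Sum>e<D. (cnj (u a) * X a c * u' c) * (cnj (w b) * Y b e * w' e))"
    unfolding sesq_def tensor_fun_def kron_fun_def sum_lessThan_mult
    by (auto intro!: sum.cong simp: algebra_simps sum_distrib_left)
  also have "\<dots> = sesq D u X u' * sesq D w Y w'"
    unfolding sesq_def by (simp add: sum_product)
  finally show ?thesis .
qed

lemma kron_fun_outer: "kron_fun D (outer u) (outer w) = outer (tensor_fun D u w)"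
  unfolding kron_fun_def outer_def tensor_fun_def by (simp add: fun_eq_iff algebra_simps)

lemma mtrace_mult_eq_tr_prod:
  assumes "A \<in> carrier_mat n n" "B \<in> carrier_mat n n"
  shows "mtrace (A * B) = tr_prod n (entries A) (entries B)"
  using assms unfolding mtrace_def tr_prod_def entries_def
  by (auto simp: scalar_prod_def intro!: sum.cong)

lemma quadratic_form_eq_sesq:
  assumes "\<rho> \<in> carrier_mat n n" "v \<in> carrier_vec n"
  shows "conjugate v \<bullet> (\<rho> *\<^sub>v v) = sesq n (vec_index v) (entries \<rho>) (vec_index v)"
  using assms unfolding sesq_def entries_def
  by (auto simp: scalar_prod_def sum_distrib_left algebra_simps lessThan_atLeast0 intro!: sum.cong)

lemma psd_sesq_nonneg:
  assumes "psd n \<rho>"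
  shows "0 \<le> Re (sesq n x (entries \<rho>) x)"
proof -
  have "\<rho> \<in> carrier_mat n n" using assms unfolding psd_def by auto
  then have "conjugate (vec n x) \<bullet> (\<rho> *\<^sub>v vec n x) = sesq n x (entries \<rho>) x"
    by (subst quadratic_form_eq_sesq) (auto intro!: sesq_cong simp: sesq_def)
  moreover have "vec n x \<in> carrier_vec n" by simp
  ultimately show ?thesis using assms unfolding psd_def by metis
qed

lemma kron_carrier:
  "A \<in> carrier_mat D D \<Longrightarrow> B \<in> carrier_mat D D \<Longrightarrow> kron A B \<in> carrier_mat (D * D) (D * D)"
  unfolding kron_def by auto

lemma div_mod_less_square:
  fixes i D :: nat
  assumes "i < D * D"
  shows "i div D < D" "i mod D < D"
proof -
  have "D > 0" using assms by (cases D) auto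
  then show "i div D < D" "i mod D < D" using assms by (auto simp: less_mult_imp_div_less)
qed

lemma entries_kron:
  assumes "A \<in> carrier_mat D D" "B \<in> carrier_mat D D" "i < D * D" "k < D * D"
  shows "entries (kron A B) i k = kron_fun D (entries A) (entries B) i k"
  using assms unfolding kron_def kron_fun_def entries_def by auto

lemma entries_ket_bra:
  "\<psi> \<in> carrier_vec D \<Longrightarrow> i < D \<Longrightarrow> k < D \<Longrightarrow> entries (ket_bra \<psi>) i k = outer (vec_index \<psi>) i k"
  unfolding ket_bra_def entries_def outer_def by auto

lemma entries_one: "i < D \<Longrightarrow> k < D \<Longrightarrow> entries (1\<^sub>m D) i k = id_fun i k"
  unfolding entries_def id_fun_def by auto

lemma entries_Omega:
  "\<psi> \<in> carrier_vec D \<Longrightarrow> i < D \<Longrightarrow> k < D \<Longrightarrow>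
   entries (Omega lam \<psi>) i k = (1 - of_real lam) * outer (vec_index \<psi>) i k + of_real lam * id_fun i k"
  unfolding Omega_def ket_bra_def entries_def outer_def id_fun_def by (auto simp: algebra_simps)

lemma ket_bra_carrier: "\<psi> \<in> carrier_vec D \<Longrightarrow> ket_bra \<psi> \<in> carrier_mat D D"
  unfolding ket_bra_def by auto

lemma Omega_carrier: "\<psi> \<in> carrier_vec D \<Longrightarrow> Omega lam \<psi> \<in> carrier_mat D D"
  unfolding Omega_def ket_bra_def by auto

section \<open>The swap of the two tensor factors\<close>

definition swap_index :: "nat \<Rightarrow> nat \<Rightarrow> nat" where
  "swap_index D i = (i mod D) * D + i div D"

lemma swap_index:
  assumes "i < D * D"
  shows "swap_index D i < D * D" "swap_index D (swap_index D i) = i"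
    "swap_index D i div D = i mod D" "swap_index D i mod D = i div D"
proof -
  note lt = div_mod_less_square[OF assms]
  show div_mod: "swap_index D i div D = i mod D" "swap_index D i mod D = i div D"
    using lt unfolding swap_index_def by auto
  have "(i mod D) * D + i div D < (i mod D + 1) * D" using lt by simp
  also have "\<dots> \<le> D * D" using lt by (metis Suc_eq_plus1 Suc_leI mult_le_mono1)
  finally show "swap_index D i < D * D" unfolding swap_index_def .
  show "swap_index D (swap_index D i) = i" using div_mod unfolding swap_index_def[of D "swap_index D i"] by simp
qed

lemma bij_betw_swap_index: "bij_betw (swap_index D) {..<D * D} {..<D * D}"
  by (rule bij_betw_byWitness[where f' = "swap_index D"]) (auto simp: swap_index)

lemma swap_index_eq_iff:
  assumes "i < D * D" "l < D * D"
  shows "(l = swap_index D i) = (i = swap_index D l)"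
  using swap_index(2)[OF assms(1)] swap_index(2)[OF assms(2)] by metis

lemma swap_op_index:
  assumes "i < D * D" "l < D * D"
  shows "swap_op D $$ (i, l) = (if l = swap_index D i then 1 else 0)"
  using assms swap_index_eq_iff[OF assms] unfolding swap_op_def by (simp add: swap_index_def)

lemma swap_conj_index:
  assumes "\<rho> \<in> carrier_mat (D * D) (D * D)" "i < D * D" "k < D * D"
  shows "(swap_op D * \<rho> * swap_op D) $$ (i, k) = \<rho> $$ (swap_index D i, swap_index D k)"
proof -
  have sc: "swap_op D \<in> carrier_mat (D * D) (D * D)" unfolding swap_op_def by auto
  have left: "(swap_op D * \<rho>) $$ (i, l) = \<rho> $$ (swap_index D i, l)" if "l < D * D" for l
  proof -
    have "(swap_op D * \<rho>) $$ (i, l) = (\<Sum>j<D * D. (if j = swap_index D i then 1 else 0) * \<rho> $$ (j, l))"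
      using assms sc that
      by (auto simp: scalar_prod_def lessThan_atLeast0 swap_op_index intro!: sum.cong split del: if_split)
    then show ?thesis using assms(2) by (simp add: swap_index if_distrib[where f="\<lambda>x. x * _"] cong: if_cong)
  qed
  have "(swap_op D * \<rho> * swap_op D) $$ (i, k) = row (swap_op D * \<rho>) i \<bullet> col (swap_op D) k"
    using assms sc by (intro index_mult_mat) auto
  also have "\<dots> = (\<Sum>l<D * D. \<rho> $$ (swap_index D i, l) * (if l = swap_index D k then 1 else 0))"
    unfolding scalar_prod_def using assms sc
    by (intro sum.cong) (auto simp: lessThan_atLeast0 swap_op_index swap_index_eq_iff left[symmetric] split del: if_split)
  also have "\<dots> = \<rho> $$ (swap_index D i, swap_index D k)"
    using assms(3) by (simp add: swap_index if_distrib[where f="\<lambda>x. _ * x"] cong: if_cong)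
  finally show ?thesis .
qed

section \<open>Two-copy moments\<close>

definition pair_moment :: "nat \<Rightarrow> complex mat \<Rightarrow> (nat \<Rightarrow> nat \<Rightarrow> complex) \<Rightarrow> (nat \<Rightarrow> nat \<Rightarrow> complex) \<Rightarrow> complex" where
  "pair_moment D \<rho> X Y = tr_prod (D * D) (kron_fun D X Y) (entries \<rho>)"

lemma pair_moment_lincomb:
  "pair_moment D \<rho> (\<lambda>i k. a * X i k + b * X' i k) Y = a * pair_moment D \<rho> X Y + b * pair_moment D \<rho> X' Y"
proof -
  have "kron_fun D (\<lambda>i k. a * X i k + b * X' i k) Y = (\<lambda>i k. a * kron_fun D X Y i k + b * kron_fun D X' Y i k)"
    unfolding kron_fun_def by (simp add: fun_eq_iff algebra_simps)
  then show ?thesis unfolding pair_moment_def by (simp add: tr_prod_add tr_prod_scale)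
qed

lemma pair_moment_diff:
  "pair_moment D \<rho> (\<lambda>i k. X i k - X' i k) Y = pair_moment D \<rho> X Y - pair_moment D \<rho> X' Y"
proof -
  have "kron_fun D (\<lambda>i k. X i k - X' i k) Y = (\<lambda>i k. kron_fun D X Y i k - kron_fun D X' Y i k)"
    unfolding kron_fun_def by (simp add: fun_eq_iff algebra_simps)
  then show ?thesis unfolding pair_moment_def by (simp add: tr_prod_diff)
qed

lemma pair_moment_diff_right:
  "pair_moment D \<rho> X (\<lambda>i k. Y i k - Y' i k) = pair_moment D \<rho> X Y - pair_moment D \<rho> X Y'"
proof -
  have "kron_fun D X (\<lambda>i k. Y i k - Y' i k) = (\<lambda>i k. kron_fun D X Y i k - kron_fun D X Y' i k)"
    unfolding kron_fun_def by (simp add: fun_eq_iff algebra_simps)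
  then show ?thesis unfolding pair_moment_def by (simp add: tr_prod_diff)
qed

lemma pair_moment_id_fun:
  assumes "\<rho> \<in> carrier_mat (D * D) (D * D)"
  shows "pair_moment D \<rho> id_fun id_fun = mtrace \<rho>"
proof -
  have "kron_fun D id_fun id_fun = id_fun"
    unfolding kron_fun_def id_fun_def by (auto simp: fun_eq_iff) (metis div_mult_mod_eq)
  then show ?thesis
    using assms unfolding pair_moment_def tr_prod_def id_fun_def mtrace_def entries_def
    by (simp add: if_distrib[where f="\<lambda>x. x * _"] cong: if_cong)
qed

lemma pair_moment_swap:
  assumes "\<rho> \<in> carrier_mat (D * D) (D * D)" "perm_inv2 D \<rho>"
  shows "pair_moment D \<rho> X Y = pair_moment D \<rho> Y X"
proof -
  let ?s = "swap_index D"
  have \<rho>_swap: "entries \<rho> k i = entries \<rho> (?s k) (?s i)" if "k < D * D" "i < D * D" for i k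
    using swap_conj_index[OF assms(1) that] assms(2) unfolding perm_inv2_def entries_def by simp
  have "pair_moment D \<rho> X Y = (\<Sum>i<D * D. \<Sum>k<D * D. kron_fun D X Y i k * entries \<rho> (?s k) (?s i))"
    unfolding pair_moment_def tr_prod_def by (auto simp: \<rho>_swap intro!: sum.cong)
  also have "\<dots> = (\<Sum>i<D * D. \<Sum>k<D * D. kron_fun D X Y (?s i) (?s k) * entries \<rho> (?s (?s k)) (?s (?s i)))"
    by (subst sum.reindex_bij_betw[OF bij_betw_swap_index, symmetric])
       (auto intro!: sum.cong sum.reindex_bij_betw[OF bij_betw_swap_index, symmetric])
  also have "\<dots> = pair_moment D \<rho> Y X"
    unfolding pair_moment_def tr_prod_def by (auto simp: swap_index kron_fun_def intro!: sum.cong)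
  finally show ?thesis .
qed

lemma pair_moment_gram_nonneg:
  assumes "psd (D * D) \<rho>"
    and X: "\<And>i k. i < D \<Longrightarrow> k < D \<Longrightarrow> X i k = (\<Sum>j\<in>J. outer (x j) i k)"
    and Y: "\<And>i k. i < D \<Longrightarrow> k < D \<Longrightarrow> Y i k = (\<Sum>l\<in>L. outer (y l) i k)"
  shows "0 \<le> Re (pair_moment D \<rho> X Y)"
proof -
  have "kron_fun D X Y i k = (\<Sum>j\<in>J. \<Sum>l\<in>L. outer (tensor_fun D (x j) (y l)) i k)"
    if "i < D * D" "k < D * D" for i k
  proof -
    have "kron_fun D X Y i k = (\<Sum>j\<in>J. \<Sum>l\<in>L. kron_fun D (outer (x j)) (outer (y l)) i k)"
      using X Y div_mod_less_square[OF that(1)] div_mod_less_square[OF that(2)]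
      by (simp add: kron_fun_def sum_product)
    then show ?thesis by (simp add: kron_fun_outer)
  qed
  then have "pair_moment D \<rho> X Y =
      tr_prod (D * D) (\<lambda>i k. \<Sum>j\<in>J. \<Sum>l\<in>L. outer (tensor_fun D (x j) (y l)) i k) (entries \<rho>)"
    unfolding pair_moment_def by (rule tr_prod_cong)
  also have "\<dots> = (\<Sum>j\<in>J. \<Sum>l\<in>L. sesq (D * D) (tensor_fun D (x j) (y l)) (entries \<rho>) (tensor_fun D (x j) (y l)))"
    by (simp add: tr_prod_sum tr_prod_outer)
  finally have "pair_moment D \<rho> X Y = \<dots>" .
  then show ?thesis
    by (simp add: Re_sum sum_nonneg psd_sesq_nonneg[OF assms(1)])
qed

text \<open>The complement of a rank-one projection is again a projection, hence the Gram matrix of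
  its own columns.\<close>

lemma complement_outer_gram:
  assumes "(\<Sum>j<D. cnj (v j) * v j) = 1" "b < D" "b' < D"
  shows "id_fun b b' - outer v b b' = (\<Sum>j<D. outer (\<lambda>i. id_fun i j - outer v i j) b b')"
proof -
  have "outer (\<lambda>i. id_fun i j - outer v i j) b b' =
      (if j = b then (if j = b' then 1 else 0) - cnj (v b') * v j else 0)
      - v b * cnj (v j) * (if j = b' then 1 else 0) + v b * cnj (v b') * (cnj (v j) * v j)" for j
    unfolding outer_def id_fun_def by (auto simp: algebra_simps)
  then have "(\<Sum>j<D. outer (\<lambda>i. id_fun i j - outer v i j) b b') =
      (\<Sum>j<D. (if j = b then (if j = b' then 1 else 0) - cnj (v b') * v j else 0))
      - (\<Sum>j<D. v b * cnj (v j) * (if j = b' then 1 else 0)) + v b * cnj (v b') * (\<Sum>j<D. cnj (v j) * v j)"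
    by (simp add: sum.distrib sum_subtractf sum_distrib_left)
  also have "\<dots> = id_fun b b' - outer v b b'"
    using assms unfolding outer_def id_fun_def by (simp add: if_distrib[where f="\<lambda>x. _ * x"] cong: if_cong)
  finally show ?thesis by simp
qed

lemma p_val_eq_pair_moments:
  assumes "\<psi> \<in> carrier_vec D" "\<rho> \<in> carrier_mat (D * D) (D * D)"
  shows "p_val lam \<psi> \<rho> = (1 - lam) * Re (pair_moment D \<rho> (outer (vec_index \<psi>)) id_fun)
                          + lam * Re (pair_moment D \<rho> id_fun id_fun)"
proof -
  have "p_val lam \<psi> \<rho> = Re (tr_prod (D * D) (entries (kron (Omega lam \<psi>) (1\<^sub>m D))) (entries \<rho>))"
    using assms unfolding p_val_def
    by (simp add: mtrace_mult_eq_tr_prod[OF kron_carrier[OF Omega_carrier[OF assms(1)] one_carrier_mat]])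
  also have "tr_prod (D * D) (entries (kron (Omega lam \<psi>) (1\<^sub>m D))) (entries \<rho>) =
      pair_moment D \<rho> (\<lambda>i k. (1 - of_real lam) * outer (vec_index \<psi>) i k + of_real lam * id_fun i k) id_fun"
    unfolding pair_moment_def using assms
    by (intro tr_prod_cong)
      (simp add: entries_kron[OF Omega_carrier one_carrier_mat] kron_fun_def entries_Omega
        entries_one div_mod_less_square)
  finally show ?thesis by (simp add: pair_moment_lincomb)
qed

lemma f_val_eq_pair_moments:
  assumes "\<psi> \<in> carrier_vec D" "\<rho> \<in> carrier_mat (D * D) (D * D)"
  shows "f_val lam \<psi> \<rho> = (1 - lam) * Re (pair_moment D \<rho> (outer (vec_index \<psi>)) (outer (vec_index \<psi>)))
                          + lam * Re (pair_moment D \<rho> id_fun (outer (vec_index \<psi>)))"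
proof -
  have "f_val lam \<psi> \<rho> = Re (tr_prod (D * D) (entries (kron (Omega lam \<psi>) (ket_bra \<psi>))) (entries \<rho>))"
    using assms unfolding f_val_def
    by (simp add: mtrace_mult_eq_tr_prod[OF kron_carrier[OF Omega_carrier ket_bra_carrier]])
  also have "tr_prod (D * D) (entries (kron (Omega lam \<psi>) (ket_bra \<psi>))) (entries \<rho>) =
      pair_moment D \<rho> (\<lambda>i k. (1 - of_real lam) * outer (vec_index \<psi>) i k + of_real lam * id_fun i k)
        (outer (vec_index \<psi>))"
    unfolding pair_moment_def using assms
    by (intro tr_prod_cong)
      (simp add: entries_kron[OF Omega_carrier ket_bra_carrier] kron_fun_def entries_Omega
        entries_ket_bra div_mod_less_square)
  finally show ?thesis by (simp add: pair_moment_lincomb)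
qed

definition admissible_moments :: "real \<Rightarrow> real \<Rightarrow> bool" where
  "admissible_moments A B \<longleftrightarrow> 0 \<le> A \<and> A \<le> B \<and> 2 * B \<le> 1 + A"

lemma unit_vec_C_inner:
  assumes "unit_vec_C D \<psi>"
  shows "(\<Sum>i<D. cnj (\<psi> $ i) * \<psi> $ i) = 1"
proof -
  have "(\<Sum>i<D. cnj (\<psi> $ i) * \<psi> $ i) = (\<Sum>i<D. complex_of_real ((cmod (\<psi> $ i))\<^sup>2))"
    by (intro sum.cong refl) (metis complex_norm_square mult.commute)
  also have "\<dots> = 1" using assms unfolding unit_vec_C_def of_real_sum[symmetric] by simp
  finally show ?thesis .
qed

lemma feasible_state_moments:
  assumes \<psi>: "unit_vec_C D \<psi>" and \<rho>: "density_op (D * D) \<rho>" "perm_inv2 D \<rho>"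
  obtains A B where "admissible_moments A B"
    "p_val lam \<psi> \<rho> = (1 - lam) * B + lam" "f_val lam \<psi> \<rho> = (1 - lam) * A + lam * B"
proof -
  let ?P = "outer (vec_index \<psi>)"
  let ?Q = "\<lambda>i k. id_fun i k - ?P i k"
  let ?m = "\<lambda>X Y. Re (pair_moment D \<rho> X Y)"
  have psd: "psd (D * D) \<rho>" and tr: "mtrace \<rho> = 1" using \<rho>(1) unfolding density_op_def by auto
  have rc: "\<rho> \<in> carrier_mat (D * D) (D * D)" using psd unfolding psd_def by auto
  have \<psi>c: "\<psi> \<in> carrier_vec D" using \<psi> unfolding unit_vec_C_def by auto
  have one: "?m id_fun id_fun = 1" using pair_moment_id_fun[OF rc] tr by simp
  have sym: "?m id_fun ?P = ?m ?P id_fun" using pair_moment_swap[OF rc \<rho>(2)] by simp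
  have P_gram: "?P i k = (\<Sum>j\<in>{0::nat}. outer (vec_index \<psi>) i k)" for i k by simp
  note Q_gram = complement_outer_gram[OF unit_vec_C_inner[OF \<psi>]]
  have "0 \<le> ?m ?P ?P" by (rule pair_moment_gram_nonneg[OF psd P_gram P_gram])
  moreover have "0 \<le> ?m ?P ?Q" by (rule pair_moment_gram_nonneg[OF psd P_gram Q_gram])
  moreover have "0 \<le> ?m ?Q ?Q" by (rule pair_moment_gram_nonneg[OF psd Q_gram Q_gram])
  ultimately have "admissible_moments (?m ?P ?P) (?m ?P id_fun)"
    using one sym unfolding admissible_moments_def by (simp add: pair_moment_diff pair_moment_diff_right)
  moreover have "p_val lam \<psi> \<rho> = (1 - lam) * ?m ?P id_fun + lam"
    using p_val_eq_pair_moments[OF \<psi>c rc] one by simp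
  moreover have "f_val lam \<psi> \<rho> = (1 - lam) * ?m ?P ?P + lam * ?m ?P id_fun"
    using f_val_eq_pair_moments[OF \<psi>c rc] sym by simp
  ultimately show ?thesis using that by blast
qed

section \<open>Mixtures of product states\<close>

definition product_mixture ::
  "nat \<Rightarrow> nat set \<Rightarrow> (nat \<Rightarrow> real) \<Rightarrow> (nat \<Rightarrow> nat \<Rightarrow> complex) \<Rightarrow> (nat \<Rightarrow> nat \<Rightarrow> complex) \<Rightarrow> complex mat" where
  "product_mixture D J c u w =
     mat (D * D) (D * D) (\<lambda>(i, k). \<Sum>j\<in>J. of_real (c j) * outer (tensor_fun D (u j) (w j)) i k)"

lemma product_mixture_carrier: "product_mixture D J c u w \<in> carrier_mat (D * D) (D * D)"
  unfolding product_mixture_def by auto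

lemma psd_product_mixture:
  assumes "\<And>j. j \<in> J \<Longrightarrow> 0 \<le> c j"
  shows "psd (D * D) (product_mixture D J c u w)"
  unfolding psd_def
proof (intro conjI ballI)
  show "product_mixture D J c u w \<in> carrier_mat (D * D) (D * D)" by (rule product_mixture_carrier)
  fix v :: "complex vec" assume v: "v \<in> carrier_vec (D * D)"
  let ?x = "vec_index v"
  have "conjugate v \<bullet> (product_mixture D J c u w *\<^sub>v v) =
      sesq (D * D) ?x (\<lambda>i k. \<Sum>j\<in>J. of_real (c j) * outer (tensor_fun D (u j) (w j)) i k) ?x"
    unfolding quadratic_form_eq_sesq[OF product_mixture_carrier v]
    by (intro sesq_cong) (simp add: product_mixture_def entries_def)
  also have "\<dots> = of_real (\<Sum>j\<in>J. c j * (cmod (\<Sum>i<D * D. cnj (?x i) * tensor_fun D (u j) (w j) i))\<^sup>2)"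
    by (simp add: sesq_sum sesq_outer)
  finally have qf: "conjugate v \<bullet> (product_mixture D J c u w *\<^sub>v v) = \<dots>" .
  show "Im (conjugate v \<bullet> (product_mixture D J c u w *\<^sub>v v)) = 0" unfolding qf by simp
  show "0 \<le> Re (conjugate v \<bullet> (product_mixture D J c u w *\<^sub>v v))" unfolding qf
    using assms by (simp add: sum_nonneg)
qed

lemma pair_moment_product_mixture:
  "pair_moment D (product_mixture D J c u w) X Y =
     (\<Sum>j\<in>J. of_real (c j) * (sesq D (u j) X (u j) * sesq D (w j) Y (w j)))"
proof -
  have "pair_moment D (product_mixture D J c u w) X Y =
      tr_prod (D * D) (kron_fun D X Y) (\<lambda>i k. \<Sum>j\<in>J. of_real (c j) * outer (tensor_fun D (u j) (w j)) i k)"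
    unfolding pair_moment_def by (rule tr_prod_cong_right) (simp add: product_mixture_def entries_def)
  then show ?thesis by (simp add: tr_prod_sum_right tr_prod_outer_right sesq_kron_tensor)
qed

lemma swap_conj_product_mixture:
  "swap_op D * product_mixture D J c u w * swap_op D = product_mixture D J c w u"
proof (rule eq_matI)
  fix i k assume "i < dim_row (product_mixture D J c w u)" "k < dim_col (product_mixture D J c w u)"
  then have ik: "i < D * D" "k < D * D" by (simp_all add: product_mixture_def)
  have "(swap_op D * product_mixture D J c u w * swap_op D) $$ (i, k)
      = product_mixture D J c u w $$ (swap_index D i, swap_index D k)"
    by (rule swap_conj_index[OF product_mixture_carrier ik])
  also have "\<dots> = product_mixture D J c w u $$ (i, k)"
    using ik by (simp add: product_mixture_def swap_index outer_def tensor_fun_def mult_ac)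
  finally show "(swap_op D * product_mixture D J c u w * swap_op D) $$ (i, k) = product_mixture D J c w u $$ (i, k)" .
qed (simp_all add: product_mixture_def swap_op_def)

lemma exists_orthogonal_unit:
  fixes v :: "nat \<Rightarrow> complex"
  assumes "2 \<le> D" "k < D" "v k \<noteq> 0"
  obtains \<phi> where "(\<Sum>i<D. cnj (\<phi> i) * \<phi> i) = 1" "(\<Sum>i<D. cnj (\<phi> i) * v i) = 0"
proof -
  define j where "j = (if k = 0 then 1 else 0 :: nat)"
  have j: "j < D" "j \<noteq> k" using assms unfolding j_def by auto
  define s where "s = sqrt ((cmod (v j))\<^sup>2 + (cmod (v k))\<^sup>2)"
  have s2: "s\<^sup>2 = (cmod (v j))\<^sup>2 + (cmod (v k))\<^sup>2" unfolding s_def by simp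
  have "s > 0" unfolding s_def using assms(3) by (intro real_sqrt_gt_zero) (simp add: add_nonneg_pos)
  define \<phi> where "\<phi> = (\<lambda>i. (if i = k then cnj (v j) else if i = j then - cnj (v k) else 0) / of_real s)"
  have supp: "(\<Sum>i<D. cnj (\<phi> i) * g i) = cnj (\<phi> j) * g j + cnj (\<phi> k) * g k" for g
  proof -
    have "(\<Sum>i<D. cnj (\<phi> i) * g i) = (\<Sum>i\<in>{j, k}. cnj (\<phi> i) * g i)"
      by (rule sum.mono_neutral_right) (use assms(2) j in \<open>auto simp: \<phi>_def\<close>)
    then show ?thesis using j(2) by simp
  qed
  have "(\<Sum>i<D. cnj (\<phi> i) * \<phi> i) = (v k * cnj (v k) + v j * cnj (v j)) / of_real (s\<^sup>2)"
    using j(2) \<open>s > 0\<close> unfolding supp by (simp add: \<phi>_def field_simps power2_eq_square)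
  also have "\<dots> = 1" unfolding complex_norm_square[symmetric] s2 using \<open>s > 0\<close> s2 assms(3)
    by (simp add: of_real_add[symmetric] del: of_real_add) (simp add: add.commute)
  finally have "(\<Sum>i<D. cnj (\<phi> i) * \<phi> i) = 1" .
  moreover have "(\<Sum>i<D. cnj (\<phi> i) * v i) = 0"
    using j(2) \<open>s > 0\<close> unfolding supp by (simp add: \<phi>_def field_simps)
  ultimately show ?thesis using that by blast
qed

lemma admissible_moments_realizable:
  assumes D: "2 \<le> D" and \<psi>: "unit_vec_C D \<psi>" and AB: "admissible_moments A B"
  obtains \<rho> where "density_op (D * D) \<rho>" "perm_inv2 D \<rho>"
    "p_val lam \<psi> \<rho> = (1 - lam) * B + lam" "f_val lam \<psi> \<rho> = (1 - lam) * A + lam * B"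
proof -
  let ?v = "vec_index \<psi>"
  let ?P = "outer ?v"
  have \<psi>c: "\<psi> \<in> carrier_vec D" using \<psi> unfolding unit_vec_C_def by auto
  have \<psi>1: "(\<Sum>i<D. cnj (?v i) * ?v i) = 1" by (rule unit_vec_C_inner[OF \<psi>])
  have "\<exists>k<D. ?v k \<noteq> 0"
  proof (rule ccontr)
    assume "\<not> (\<exists>k<D. ?v k \<noteq> 0)"
    then have "(\<Sum>i<D. cnj (?v i) * ?v i) = 0" by simp
    with \<psi>1 show False by simp
  qed
  then obtain \<phi> where \<phi>1: "(\<Sum>i<D. cnj (\<phi> i) * \<phi> i) = 1" and orth: "(\<Sum>i<D. cnj (\<phi> i) * ?v i) = 0"
    using exists_orthogonal_unit[OF D] by blast
  define c where "c = (\<lambda>j. [A, B - A, B - A, 1 - 2 * B + A] ! j)"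
  define u where "u = (\<lambda>j. [?v, ?v, \<phi>, \<phi>] ! j)"
  define w where "w = (\<lambda>j. [?v, \<phi>, ?v, \<phi>] ! j)"
  define \<rho> where "\<rho> = product_mixture D {0, 1, 2, 3} c u w"
  have rc: "\<rho> \<in> carrier_mat (D * D) (D * D)" unfolding \<rho>_def by (rule product_mixture_carrier)
  have psd: "psd (D * D) \<rho>"
    unfolding \<rho>_def using AB by (intro psd_product_mixture) (auto simp: c_def admissible_moments_def)
  have "perm_inv2 D \<rho>"
    unfolding perm_inv2_def \<rho>_def swap_conj_product_mixture
    by (simp add: product_mixture_def u_def w_def c_def algebra_simps)
  have sesq_values: "sesq D ?v ?P ?v = 1" "sesq D \<phi> ?P \<phi> = 0" "sesq D ?v id_fun ?v = 1" "sesq D \<phi> id_fun \<phi> = 1"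
    using \<psi>1 \<phi>1 orth by (simp_all add: sesq_outer sesq_id_fun)
  have moment: "pair_moment D \<rho> X Y =
      of_real A * (sesq D ?v X ?v * sesq D ?v Y ?v) + of_real (B - A) * (sesq D ?v X ?v * sesq D \<phi> Y \<phi>)
      + of_real (B - A) * (sesq D \<phi> X \<phi> * sesq D ?v Y ?v) + of_real (1 - 2 * B + A) * (sesq D \<phi> X \<phi> * sesq D \<phi> Y \<phi>)"
    for X Y
    unfolding \<rho>_def pair_moment_product_mixture by (simp add: c_def u_def w_def add.assoc)
  have II: "pair_moment D \<rho> id_fun id_fun = 1"
    unfolding moment sesq_values by (simp add: algebra_simps)
  have PI: "pair_moment D \<rho> ?P id_fun = B" and IP: "pair_moment D \<rho> id_fun ?P = B"
    and PP: "pair_moment D \<rho> ?P ?P = A"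
    unfolding moment sesq_values by (simp_all add: algebra_simps)
  have "density_op (D * D) \<rho>"
    using psd pair_moment_id_fun[OF rc] II unfolding density_op_def by simp
  moreover have "p_val lam \<psi> \<rho> = (1 - lam) * B + lam"
    using p_val_eq_pair_moments[OF \<psi>c rc] PI II by simp
  moreover have "f_val lam \<psi> \<rho> = (1 - lam) * A + lam * B"
    using f_val_eq_pair_moments[OF \<psi>c rc] PP IP by simp
  ultimately show ?thesis using that \<open>perm_inv2 D \<rho>\<close> by blast
qed

section \<open>The linear program\<close>

definition zeta1_formula :: "real \<Rightarrow> real \<Rightarrow> real" where
  "zeta1_formula lam \<delta> = Max {0, lam * (\<delta> - lam) / (1 - lam), (\<delta> * (2 - lam) - 1) / (1 - lam)}"

lemma zeta1_formula_cases:
  fixes lam \<delta> :: real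
  assumes "0 \<le> lam" "lam < 1"
  shows "(\<delta> \<le> lam \<longrightarrow> zeta1_formula lam \<delta> = 0)
       \<and> (lam \<le> \<delta> \<and> \<delta> \<le> (1 + lam) / 2 \<longrightarrow> zeta1_formula lam \<delta> = lam * (\<delta> - lam) / (1 - lam))
       \<and> ((1 + lam) / 2 \<le> \<delta> \<longrightarrow> zeta1_formula lam \<delta> = (\<delta> * (2 - lam) - 1) / (1 - lam))"
proof -
  define x where "x = lam * (\<delta> - lam) / (1 - lam)"
  define y where "y = (\<delta> * (2 - lam) - 1) / (1 - lam)"
  have "x - y = (lam * (\<delta> - lam) - (\<delta> * (2 - lam) - 1)) / (1 - lam)"
    unfolding x_def y_def by (simp add: diff_divide_distrib)
  also have "\<dots> = 1 + lam - 2 * \<delta>"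
    using assms by (simp add: field_simps)
  finally have xy: "x - y = 1 + lam - 2 * \<delta>" .
  have "\<delta> \<le> lam \<Longrightarrow> x \<le> 0" "lam \<le> \<delta> \<Longrightarrow> 0 \<le> x"
    using assms unfolding x_def by (auto intro!: divide_nonpos_pos mult_nonneg_nonpos)
  then show ?thesis
    using xy assms unfolding zeta1_formula_def x_def[symmetric] y_def[symmetric] by (auto simp: max_def)
qed

lemma zeta1_formula_le_objective:
  fixes lam \<delta> A B :: real
  assumes "0 \<le> lam" "lam < 1" "admissible_moments A B" "\<delta> \<le> (1 - lam) * B + lam"
  shows "zeta1_formula lam \<delta> \<le> (1 - lam) * A + lam * B"
proof -
  let ?f = "(1 - lam) * A + lam * B"
  have AB: "0 \<le> A" "0 \<le> B - A" "0 \<le> 1 - 2 * B + A"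
    using assms(3) unfolding admissible_moments_def by auto
  have "0 \<le> ?f" using assms AB by simp
  moreover have "lam * (\<delta> - lam) \<le> ?f * (1 - lam)"
  proof -
    have "?f * (1 - lam) - lam * (\<delta> - lam) = (1 - lam)\<^sup>2 * A + lam * ((1 - lam) * B + lam - \<delta>)"
      by (simp add: algebra_simps power2_eq_square)
    moreover have "0 \<le> (1 - lam)\<^sup>2 * A" "0 \<le> lam * ((1 - lam) * B + lam - \<delta>)"
      using assms AB by simp_all
    ultimately show ?thesis by linarith
  qed
  moreover have "\<delta> * (2 - lam) - 1 \<le> ?f * (1 - lam)"
  proof -
    have "?f * (1 - lam) - (\<delta> * (2 - lam) - 1)
        = (1 - lam)\<^sup>2 * (1 - 2 * B + A) + (2 - lam) * ((1 - lam) * B + lam - \<delta>)"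
      by (simp add: algebra_simps power2_eq_square)
    moreover have "0 \<le> (1 - lam)\<^sup>2 * (1 - 2 * B + A)" "0 \<le> (2 - lam) * ((1 - lam) * B + lam - \<delta>)"
      using assms AB by simp_all
    ultimately show ?thesis by linarith
  qed
  ultimately show ?thesis
    using assms unfolding zeta1_formula_def by (simp add: pos_divide_le_eq)
qed

lemma zeta1_formula_attained:
  fixes lam \<delta> :: real
  assumes "0 \<le> lam" "lam < 1" "0 \<le> \<delta>" "\<delta> \<le> 1"
  obtains A B where "admissible_moments A B" "\<delta> \<le> (1 - lam) * B + lam"
    "(1 - lam) * A + lam * B = zeta1_formula lam \<delta>"
proof -
  define t where "t = (\<delta> - lam) / (1 - lam)"
  have \<delta>_t: "\<delta> = (1 - lam) * t + lam" unfolding t_def using assms by simp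
  note cases = zeta1_formula_cases[OF assms(1,2), of \<delta>]
  consider "\<delta> \<le> lam" | "lam \<le> \<delta>" "\<delta> \<le> (1 + lam) / 2" | "(1 + lam) / 2 \<le> \<delta>" by linarith
  then show ?thesis
  proof cases
    case 1
    then show ?thesis using that[of 0 0] cases by (simp add: admissible_moments_def)
  next
    case 2
    then have "0 \<le> t" "2 * t \<le> 1" using assms unfolding t_def by (simp_all add: field_simps)
    moreover have "lam * t = lam * (\<delta> - lam) / (1 - lam)" unfolding t_def by simp
    ultimately show ?thesis using that[of 0 t] cases 2 \<delta>_t by (simp add: admissible_moments_def)
  next
    case 3
    then have "1 \<le> 2 * t" "t \<le> 1" using assms unfolding t_def by (simp_all add: field_simps)
    moreover have "(1 - lam) * (2 * t - 1) + lam * t = (\<delta> * (2 - lam) - 1) / (1 - lam)"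
      using assms unfolding \<delta>_t by (simp add: field_simps)
    ultimately show ?thesis using that[of "2 * t - 1" t] cases 3 \<delta>_t by (simp add: admissible_moments_def)
  qed
qed

theorem proposition2:
  fixes D :: nat and \<psi> :: "complex vec" and lam \<delta> :: real
  assumes "D \<ge> 2" and "unit_vec_C D \<psi>"
    and "0 \<le> lam" and "lam < 1"
    and "0 \<le> \<delta>" and "\<delta> \<le> 1"
  shows "is_zeta1 D lam \<psi> \<delta>
           (Max {0, lam * (\<delta> - lam) / (1 - lam), (\<delta> * (2 - lam) - 1) / (1 - lam)})
       \<and> (\<delta> \<le> lam \<longrightarrow>
            Max {0, lam * (\<delta> - lam) / (1 - lam), (\<delta> * (2 - lam) - 1) / (1 - lam)} = 0)
       \<and> (lam \<le> \<delta> \<and> \<delta> \<le> (1 + lam) / 2 \<longrightarrow>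
            Max {0, lam * (\<delta> - lam) / (1 - lam), (\<delta> * (2 - lam) - 1) / (1 - lam)}
              = lam * (\<delta> - lam) / (1 - lam))
       \<and> ((1 + lam) / 2 \<le> \<delta> \<longrightarrow>
            Max {0, lam * (\<delta> - lam) / (1 - lam), (\<delta> * (2 - lam) - 1) / (1 - lam)}
              = (\<delta> * (2 - lam) - 1) / (1 - lam))"
proof -
  have lower: "zeta1_formula lam \<delta> \<le> f_val lam \<psi> \<rho>" if "\<rho> \<in> feasible1 D lam \<psi> \<delta>" for \<rho>
  proof -
    have \<rho>: "density_op (D * D) \<rho>" "perm_inv2 D \<rho>" "\<delta> \<le> p_val lam \<psi> \<rho>"
      using that unfolding feasible1_def by auto
    obtain A B where "admissible_moments A B"
      "p_val lam \<psi> \<rho> = (1 - lam) * B + lam" "f_val lam \<psi> \<rho> = (1 - lam) * A + lam * B"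
      using feasible_state_moments[OF assms(2) \<rho>(1,2)] .
    then show ?thesis using zeta1_formula_le_objective[OF assms(3,4)] \<rho>(3) by simp
  qed
  obtain A B where AB: "admissible_moments A B" "\<delta> \<le> (1 - lam) * B + lam"
    "(1 - lam) * A + lam * B = zeta1_formula lam \<delta>"
    using zeta1_formula_attained[OF assms(3-6)] .
  obtain \<rho> where "density_op (D * D) \<rho>" "perm_inv2 D \<rho>"
    "p_val lam \<psi> \<rho> = (1 - lam) * B + lam" "f_val lam \<psi> \<rho> = (1 - lam) * A + lam * B"
    using admissible_moments_realizable[OF assms(1,2) AB(1)] .
  then have "\<rho> \<in> feasible1 D lam \<psi> \<delta>" "f_val lam \<psi> \<rho> = zeta1_formula lam \<delta>"
    using AB unfolding feasible1_def by auto
  then have "is_zeta1 D lam \<psi> \<delta> (zeta1_formula lam \<delta>)"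
    using lower unfolding is_zeta1_def by blast
  then show ?thesis using zeta1_formula_cases[OF assms(3,4), of \<delta>] unfolding zeta1_formula_def by blast
qed

end
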